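(* Let $A$ be a JBW algebra, let $p,q\in A$ be nonzero projections with $p\circ q=0$, and let $z\in A$ be a nonzero projection different from $p$ and from $q$. Then $z=p+q$ if and only if the linear span of $\{p,q,z\}$ is a two-dimensional associative subalgebra of $A$.
   Context: A JB algebra is a real Banach algebra $(A,\circ)$ with a commutative product satisfying $a\circ(b\circ a^2)=(a\circ b)\circ a^2$, $\|a^2\|\le\|a^2+b^2\|$, $\|a\|^2=\|a^2\|$; a JBW algebra is a JB algebra that is a dual Banach space. A projection is an element $p$ with $p\circ p=p$. *)

theory Defs
  imports "HOL-Analysis.Analysis"
begin

definition JB_algebra :: "('a::banach \<Rightarrow> 'a \<Rightarrow> 'a) \<Rightarrow> bool" where
  "JB_algebra jp \<longleftrightarrow>
     bilinear jp \<and>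
     (\<forall>a b. jp a b = jp b a) \<and>
     (\<forall>a b. norm (jp a b) \<le> norm a * norm b) \<and>
     (\<forall>a b. jp a (jp b (jp a a)) = jp (jp a b) (jp a a)) \<and>
     (\<forall>a b. norm (jp a a) \<le> norm (jp a a + jp b b)) \<and>
     (\<forall>a. (norm a)\<^sup>2 = norm (jp a a))"

text \<open>V (a set of bounded linear functionals on A) is a predual of A:
a closed subspace of the dual such that a \<mapsto> (f \<mapsto> f a) is an isometric
isomorphism of A onto the Banach dual of V.\<close>
definition is_predual :: "('a::real_normed_vector \<Rightarrow>\<^sub>L real) set \<Rightarrow> bool" where
  "is_predual V \<longleftrightarrow>
     subspace V \<and> closed V \<and>
     (\<forall>a::'a. norm a = (SUP f\<in>{f\<in>V. norm f \<le> 1}. \<bar>blinfun_apply f a\<bar>)) \<and>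
     (\<forall>\<phi> :: ('a \<Rightarrow>\<^sub>L real) \<Rightarrow> real.
        ((\<forall>f\<in>V. \<forall>g\<in>V. \<phi> (f + g) = \<phi> f + \<phi> g) \<and>
         (\<forall>f\<in>V. \<forall>c. \<phi> (c *\<^sub>R f) = c * \<phi> f) \<and>
         (\<exists>C. \<forall>f\<in>V. \<bar>\<phi> f\<bar> \<le> C * norm f))
        \<longrightarrow> (\<exists>a. \<forall>f\<in>V. \<phi> f = blinfun_apply f a))"

definition dual_banach_space :: "'a::real_normed_vector itself \<Rightarrow> bool" where
  "dual_banach_space (_ :: 'a itself) \<longleftrightarrow> (\<exists>V :: ('a \<Rightarrow>\<^sub>L real) set. is_predual V)"

definition JBW_algebra :: "('a::banach \<Rightarrow> 'a \<Rightarrow> 'a) \<Rightarrow> bool" where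
  "JBW_algebra jp \<longleftrightarrow> JB_algebra jp \<and> dual_banach_space TYPE('a)"

definition jprojection :: "('a \<Rightarrow> 'a \<Rightarrow> 'a) \<Rightarrow> 'a \<Rightarrow> bool" where
  "jprojection jp p \<longleftrightarrow> jp p p = p"

definition subalgebra :: "('a \<Rightarrow> 'a \<Rightarrow> 'a) \<Rightarrow> 'a::real_vector set \<Rightarrow> bool" where
  "subalgebra jp B \<longleftrightarrow> subspace B \<and> (\<forall>x\<in>B. \<forall>y\<in>B. jp x y \<in> B)"

definition associative_on :: "('a \<Rightarrow> 'a \<Rightarrow> 'a) \<Rightarrow> 'a set \<Rightarrow> bool" where
  "associative_on jp B \<longleftrightarrow> (\<forall>x\<in>B. \<forall>y\<in>B. \<forall>w\<in>B. jp (jp x y) w = jp x (jp y w))"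

end

theory Submission
  imports Defs
begin

text \<open>For orthogonal idempotents p, q the product is coordinatewise on their span,
(a p + b q)(c p + d q) = ac p + bd q. Hence span {p, q} is a two-dimensional associative
subalgebra whose only idempotents are 0, p, q and p + q, and dim span {p, q, z} = 2 forces
z \<in> span {p, q}, i.e. z = p + q.\<close>

lemma span_pair_iff:
  fixes p q :: "'a::real_vector"
  shows "x \<in> span {p, q} \<longleftrightarrow> (\<exists>a b. x = a *\<^sub>R p + b *\<^sub>R q)"
proof
  assume "x \<in> span {p, q}"
  then obtain a where "x - a *\<^sub>R p \<in> span {q}"
    by (auto simp: span_breakdown_eq)
  then obtain b where "x - a *\<^sub>R p = b *\<^sub>R q"
    by (auto simp: span_singleton)
  then have "x = a *\<^sub>R p + b *\<^sub>R q"
    by (simp add: algebra_simps)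
  then show "\<exists>a b. x = a *\<^sub>R p + b *\<^sub>R q"
    by blast
next
  assume "\<exists>a b. x = a *\<^sub>R p + b *\<^sub>R q"
  then obtain a b where "x = a *\<^sub>R p + b *\<^sub>R q"
    by blast
  then show "x \<in> span {p, q}"
    by (simp add: span_add span_scale span_base)
qed

lemma dim_span_insert_independent:
  assumes "independent B" and "finite B"
  shows "dim (span (insert z B)) = card B \<longleftrightarrow> z \<in> span B"
proof (cases "z \<in> span B")
  case True
  then show ?thesis
    using dim_span_eq_card_independent[OF assms(1)] by (simp add: span_redundant)
next
  case False
  then have "independent (insert z B)" and "z \<notin> B"
    using assms(1) span_base independent_insertI by blast+
  then show ?thesis
    using False assms(2) dim_span_eq_card_independent[of "insert z B"] by simp
qed

locale orthogonal_idempotents =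
  fixes jp :: "'a::real_vector \<Rightarrow> 'a \<Rightarrow> 'a" and p q :: 'a
  assumes bilinear: "bilinear jp"
    and idem_p: "jp p p = p" and idem_q: "jp q q = q"
    and orth: "jp p q = 0" and orth': "jp q p = 0"
    and nonzero_p: "p \<noteq> 0" and nonzero_q: "q \<noteq> 0"
begin

lemma mult_componentwise:
  "jp (a *\<^sub>R p + b *\<^sub>R q) (c *\<^sub>R p + d *\<^sub>R q) = (a * c) *\<^sub>R p + (b * d) *\<^sub>R q"
proof -
  interpret l: linear "jp x" for x
    using bilinear by (simp add: bilinear_def)
  interpret r: linear "\<lambda>x. jp x y" for y
    using bilinear by (simp add: bilinear_def)
  show ?thesis
    by (simp add: l.add l.scale r.add r.scale idem_p idem_q orth orth' mult.commute)
qed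

lemma coefficients_eq_0:
  assumes "a *\<^sub>R p + b *\<^sub>R q = 0"
  shows "a = 0 \<and> b = 0"
proof -
  have "jp 0 p = 0" "jp 0 q = 0"
    using bilinear by (simp_all add: bilinear_lzero)
  then have "a *\<^sub>R p = 0" "b *\<^sub>R q = 0"
    using assms mult_componentwise[of a b 1 0] mult_componentwise[of a b 0 1] by simp_all
  then show ?thesis
    using nonzero_p nonzero_q by simp
qed

lemma distinct_pair: "p \<noteq> q"
  using coefficients_eq_0[of 1 "-1"] by auto

lemma independent_pair: "independent {p, q}"
proof -
  have "p \<notin> span {q}"
  proof
    assume "p \<in> span {q}"
    then obtain k where "p = k *\<^sub>R q"
      by (auto simp: span_singleton)
    then show False
      using coefficients_eq_0[of 1 "- k"] by simp
  qed
  moreover have "independent {q}"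
    using nonzero_q independent_insertI[of q "{}"] by (simp add: span_empty)
  ultimately show ?thesis
    by (rule independent_insertI)
qed

lemma idempotent_in_span:
  assumes "z \<in> span {p, q}" and "jp z z = z"
  shows "z \<in> {0, p, q, p + q}"
proof -
  obtain a b where z: "z = a *\<^sub>R p + b *\<^sub>R q"
    using assms(1) by (auto simp: span_pair_iff)
  have "(a * (a - 1)) *\<^sub>R p + (b * (b - 1)) *\<^sub>R q = 0"
    using assms(2) mult_componentwise[of a b a b] by (simp add: z algebra_simps)
  then have "a * (a - 1) = 0 \<and> b * (b - 1) = 0"
    by (rule coefficients_eq_0)
  then have "a \<in> {0, 1}" "b \<in> {0, 1}"
    by auto
  then show ?thesis
    by (auto simp: z)
qed

lemma subalgebra_span: "subalgebra jp (span {p, q})"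
  unfolding subalgebra_def
proof (intro conjI ballI subspace_span)
  fix x y
  assume "x \<in> span {p, q}" and "y \<in> span {p, q}"
  then obtain a b c d where "x = a *\<^sub>R p + b *\<^sub>R q" and "y = c *\<^sub>R p + d *\<^sub>R q"
    by (auto simp: span_pair_iff)
  then show "jp x y \<in> span {p, q}"
    unfolding span_pair_iff by (auto simp: mult_componentwise)
qed

lemma associative_on_span: "associative_on jp (span {p, q})"
  unfolding associative_on_def
  by (auto simp: span_pair_iff mult_componentwise mult.assoc)

end

theorem lemma3p4:
  fixes jp :: "'a::banach \<Rightarrow> 'a \<Rightarrow> 'a" and p q z :: 'a
  assumes "JBW_algebra jp"
    and "jprojection jp p" and "p \<noteq> 0"
    and "jprojection jp q" and "q \<noteq> 0"
    and "jp p q = 0"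
    and "jprojection jp z" and "z \<noteq> 0" and "z \<noteq> p" and "z \<noteq> q"
  shows "z = p + q \<longleftrightarrow>
           (subalgebra jp (span {p, q, z}) \<and> associative_on jp (span {p, q, z})
            \<and> dim (span {p, q, z}) = 2)"
proof -
  have bilinear: "bilinear jp" and commutative: "\<forall>a b. jp a b = jp b a"
    using assms(1) unfolding JBW_algebra_def JB_algebra_def by auto
  have "jp q p = 0"
    using commutative assms(6) by metis
  then interpret orthogonal_idempotents jp p q
    using bilinear assms(2-6) by unfold_locales (simp_all add: jprojection_def)
  have reorder: "{p, q, z} = insert z {p, q}"
    by auto
  have dim_iff: "dim (span {p, q, z}) = 2 \<longleftrightarrow> z \<in> span {p, q}"
    using dim_span_insert_independent[OF independent_pair, of z] distinct_pair
    unfolding reorder by (simp add: numeral_2_eq_2)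
  have span_iff: "z \<in> span {p, q} \<longleftrightarrow> z = p + q"
  proof
    assume "z \<in> span {p, q}"
    then show "z = p + q"
      using idempotent_in_span[of z] assms(7-10) by (simp add: jprojection_def)
  qed (simp add: span_add span_base)
  show ?thesis
  proof
    assume "z = p + q"
    then have "span {p, q, z} = span {p, q}" and "dim (span {p, q, z}) = 2"
      using span_iff dim_iff unfolding reorder by (simp_all add: span_redundant)
    then show "subalgebra jp (span {p, q, z}) \<and> associative_on jp (span {p, q, z})
        \<and> dim (span {p, q, z}) = 2"
      using subalgebra_span associative_on_span by simp
  qed (use dim_iff span_iff in blast)
qed

end
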